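(* Let $\mathcal{T}_n$ denote the set of trees on $n$ vertices. If $T$ is a maximal tree with respect to $e^{M_2}$ in $\mathcal{T}_n$ (i.e., $e^{M_2}(T)\geq e^{M_2}(T'')$ for all $T''\in\mathcal{T}_n$), then the distance between any pendant vertex and any vertex with the maximum degree in $T$ is at most 2.
   Context: For a tree $G$ with edge set $E(G)$ and vertex degrees $d_G(v)$, the exponential of the second Zagreb index is $e^{M_2}(G)=\sum_{uv\in E(G)} e^{d_G(u)d_G(v)}$. A pendant vertex is a vertex of degree 1. *)

theory Defs
  imports Complex_Main
begin

definition simple_graph :: "nat set \<Rightarrow> nat set set \<Rightarrow> bool" where
  "simple_graph V E \<longleftrightarrow> (\<forall>e\<in>E. \<exists>u v. e = {u, v} \<and> u \<noteq> v \<and> u \<in> V \<and> v \<in> V)"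

definition is_path :: "nat set set \<Rightarrow> nat list \<Rightarrow> bool" where
  "is_path E xs \<longleftrightarrow> xs \<noteq> [] \<and> distinct xs \<and>
     (\<forall>i. Suc i < length xs \<longrightarrow> {xs ! i, xs ! Suc i} \<in> E)"

definition graph_connected :: "nat set \<Rightarrow> nat set set \<Rightarrow> bool" where
  "graph_connected V E \<longleftrightarrow>
     (\<forall>u\<in>V. \<forall>v\<in>V. \<exists>xs. is_path E xs \<and> hd xs = u \<and> last xs = v)"

definition has_cycle :: "nat set set \<Rightarrow> bool" where
  "has_cycle E \<longleftrightarrow> (\<exists>xs. is_path E xs \<and> 3 \<le> length xs \<and> {last xs, hd xs} \<in> E)"

definition is_tree :: "nat set \<Rightarrow> nat set set \<Rightarrow> bool" where
  "is_tree V E \<longleftrightarrow> finite V \<and> V \<noteq> {} \<and> simple_graph V E \<and> graph_connected V E \<and> \<not> has_cycle E"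

text \<open>Trees on n vertices (labelled by 0..n-1; the index is isomorphism invariant).\<close>
definition trees :: "nat \<Rightarrow> nat set set set" where
  "trees n = {E. is_tree {..<n} E}"

definition deg :: "nat set set \<Rightarrow> nat \<Rightarrow> nat" where
  "deg E v = card {e\<in>E. v \<in> e}"

text \<open>Exponential second Zagreb index: for an edge {u,v}, the product over it is d(u) d(v).\<close>
definition eM2 :: "nat set set \<Rightarrow> real" where
  "eM2 E = (\<Sum>e\<in>E. exp (real (\<Prod>v\<in>e. deg E v)))"

definition graph_dist :: "nat set set \<Rightarrow> nat \<Rightarrow> nat \<Rightarrow> nat" where
  "graph_dist E u v = (LEAST k. \<exists>xs. is_path E xs \<and> hd xs = u \<and> last xs = v \<and> length xs = Suc k)"

end

theory Submission
  imports Defs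
begin

(*
  If every edge uv of a tree on n vertices has d(u) + d(v) <= n - 1, then by AM-GM each of its
  at most n - 1 edges has weight at most exp((n-1)^2/4), so its index is below
  (n - 1) exp((n-1)^2/4) < exp((n^2-1)/4).  The double star whose centres have degrees
  floor(n/2) and ceil(n/2) already has an edge of weight exp(floor(n/2) ceil(n/2)), which is at
  least that much.  Hence a maximal tree has an edge ab with d(a) + d(b) >= n.  As a tree has no
  triangles, the neighbourhoods of a and b are disjoint, so together they contain all n vertices:
  the tree is a double star with centres a and b.  All other vertices are pendant, so a vertex of
  maximum degree is a centre, and every vertex is within distance 2 of both centres.
*)

section \<open>Paths and cycles\<close>

lemma is_path_singleton [simp]: "is_path E [x]"
  by (simp add: is_path_def)

lemma is_path_Cons_Cons [simp]:
  "is_path E (x # y # xs) \<longleftrightarrow> x \<notin> set (y # xs) \<and> {x, y} \<in> E \<and> is_path E (y # xs)"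
  unfolding is_path_def
  by (auto simp: nth_Cons split: nat.splits)

lemma is_path_take:
  assumes "is_path E xs" "0 < j"
  shows "is_path E (take j xs)"
  using assms by (auto simp: is_path_def)

lemma is_path_drop:
  assumes "is_path E xs" "j < length xs"
  shows "is_path E (drop j xs)"
  unfolding is_path_def
proof (intro conjI allI impI)
  show "drop j xs \<noteq> []" "distinct (drop j xs)" using assms by (auto simp: is_path_def)
  fix i assume "Suc i < length (drop j xs)"
  then have "Suc (j + i) < length xs" by simp
  then show "{drop j xs ! i, drop j xs ! Suc i} \<in> E"
    using assms(1) \<open>Suc i < length (drop j xs)\<close> unfolding is_path_def by auto
qed

lemma is_path_rev:
  assumes "is_path E xs"
  shows "is_path E (rev xs)"
  unfolding is_path_def
proof (intro conjI allI impI)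
  show "rev xs \<noteq> []" "distinct (rev xs)" using assms by (auto simp: is_path_def)
  fix i assume i: "Suc i < length (rev xs)"
  define j where "j = length xs - Suc (Suc i)"
  have "Suc j < length xs" "Suc j = length xs - Suc i" using i by (auto simp: j_def)
  from this(1) have "{xs ! j, xs ! Suc j} \<in> E" using assms unfolding is_path_def by blast
  then show "{rev xs ! i, rev xs ! Suc i} \<in> E"
    using i by (simp add: rev_nth j_def insert_commute Suc_diff_Suc)
qed

lemma is_path_join:
  assumes "is_path E xs" "is_path E ys" "last xs = hd ys"
  shows "\<exists>zs. is_path E zs \<and> hd zs = hd xs \<and> last zs = last ys"
  using assms
proof (induction xs rule: induct_list012)
  case 1
  then show ?case by (simp add: is_path_def)
next
  case (2 x)
  then show ?case by auto
next
  case (3 x y xs)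
  then obtain zs where zs: "is_path E zs" "hd zs = y" "last zs = last ys"
    by auto
  show ?case
  proof (cases "x \<in> set zs")
    case True
    then obtain j where "j < length zs" "zs ! j = x"
      by (auto simp: in_set_conv_nth)
    then show ?thesis
      using zs is_path_drop[OF zs(1)] by (intro exI[of _ "drop j zs"]) (auto simp: hd_drop_conv_nth)
  next
    case False
    obtain zs' where "zs = y # zs'"
      using zs by (cases zs) (auto simp: is_path_def)
    then show ?thesis
      using False zs "3.prems"(1) by (intro exI[of _ "x # zs"]) auto
  qed
qed

lemma graph_connected_via_hub:
  assumes "\<And>w. w \<in> V \<Longrightarrow> \<exists>xs. is_path E xs \<and> hd xs = w \<and> last xs = r"
  shows "graph_connected V E"
  unfolding graph_connected_def
proof (intro ballI)
  fix u v assume "u \<in> V" "v \<in> V"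
  then obtain xs ys where xs: "is_path E xs" "hd xs = u" "last xs = r"
    and ys: "is_path E ys" "hd ys = v" "last ys = r"
    using assms by meson
  have "ys \<noteq> []" using ys by (simp add: is_path_def)
  then show "\<exists>zs. is_path E zs \<and> hd zs = u \<and> last zs = v"
    using is_path_join[OF xs(1) is_path_rev[OF ys(1)]] xs ys by (simp add: hd_rev last_rev)
qed

lemma is_path_mono: "is_path E' xs \<Longrightarrow> E' \<subseteq> E \<Longrightarrow> is_path E xs"
  unfolding is_path_def by blast

lemma has_cycle_mono: "has_cycle E' \<Longrightarrow> E' \<subseteq> E \<Longrightarrow> has_cycle E"
  unfolding has_cycle_def using is_path_mono by blast

lemma has_cycle_triangle:
  "{a, b} \<in> E \<Longrightarrow> {b, c} \<in> E \<Longrightarrow> {c, a} \<in> E \<Longrightarrow> distinct [a, b, c] \<Longrightarrow> has_cycle E"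
  unfolding has_cycle_def by (intro exI[of _ "[a, b, c]"]) simp

lemma has_cycle_square:
  "{a, b} \<in> E \<Longrightarrow> {b, c} \<in> E \<Longrightarrow> {c, d} \<in> E \<Longrightarrow> {d, a} \<in> E \<Longrightarrow> distinct [a, b, c, d]
    \<Longrightarrow> has_cycle E"
  unfolding has_cycle_def by (intro exI[of _ "[a, b, c, d]"]) simp

section \<open>Neighbourhoods and forests\<close>

lemma simple_graph_edgeD:
  assumes "simple_graph V E" "{x, y} \<in> E"
  shows "x \<noteq> y" "x \<in> V" "y \<in> V"
  using assms unfolding simple_graph_def by (auto simp: doubleton_eq_iff)

lemma simple_graph_edge_cases:
  assumes "simple_graph V E" "e \<in> E"
  obtains a b where "e = {a, b}"
  using assms unfolding simple_graph_def by blast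

lemma simple_graph_edge_obtain:
  assumes "simple_graph V E" "e \<in> E" "x \<in> e"
  obtains y where "e = {x, y}"
  using assms unfolding simple_graph_def by (metis insert_commute insertE singletonD)

lemma simple_graph_finite_edges:
  assumes "finite V" "simple_graph V E"
  shows "finite E"
proof (rule finite_subset)
  show "E \<subseteq> Pow V" using assms(2) unfolding simple_graph_def by auto
qed (use assms(1) in simp)

definition neighbours :: "nat set set \<Rightarrow> nat \<Rightarrow> nat set" where
  "neighbours E x = {y. {x, y} \<in> E}"

lemma mem_neighbours_iff: "y \<in> neighbours E x \<longleftrightarrow> {x, y} \<in> E"
  by (simp add: neighbours_def)

lemma mem_neighbours_sym: "y \<in> neighbours E x \<longleftrightarrow> x \<in> neighbours E y"
  by (simp add: neighbours_def insert_commute)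

lemma neighbours_subset: "simple_graph V E \<Longrightarrow> neighbours E x \<subseteq> V"
  by (auto simp: neighbours_def dest: simple_graph_edgeD)

lemma deg_eq_card_neighbours:
  assumes "simple_graph V E"
  shows "deg E x = card (neighbours E x)"
proof -
  have "{e \<in> E. x \<in> e} \<subseteq> (\<lambda>y. {x, y}) ` neighbours E x"
    by (auto simp: neighbours_def elim: simple_graph_edge_obtain[OF assms])
  then have "bij_betw (\<lambda>y. {x, y}) (neighbours E x) {e \<in> E. x \<in> e}"
    unfolding bij_betw_def inj_on_def by (auto simp: neighbours_def doubleton_eq_iff)
  then show ?thesis unfolding deg_def by (simp add: bij_betw_same_card)
qed

lemma longest_path_starts_at_leaf:
  assumes "simple_graph V E" "\<not> has_cycle E" "is_path E (x # p # rest)" "set (x # p # rest) \<subseteq> V"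
    and longest: "\<And>ys. is_path E ys \<Longrightarrow> set ys \<subseteq> V \<Longrightarrow> length ys \<le> length (x # p # rest)"
  shows "neighbours E x = {p}"
proof -
  let ?xs = "x # p # rest"
  have "w = p" if "w \<in> neighbours E x" for w
  proof -
    have "{w, x} \<in> E" using that by (simp add: mem_neighbours_iff insert_commute)
    have "w \<in> set ?xs"
    proof (rule ccontr)
      assume "w \<notin> set ?xs"
      then have "is_path E (w # ?xs)" "set (w # ?xs) \<subseteq> V"
        using assms(3,4) \<open>{w, x} \<in> E\<close> simple_graph_edgeD(2)[OF assms(1)] by auto
      then show False using longest[of "w # ?xs"] by simp
    qed
    then obtain j where j: "j < length ?xs" "?xs ! j = w" by (meson in_set_conv_nth)
    have "x \<noteq> w" using \<open>{w, x} \<in> E\<close> simple_graph_edgeD(1)[OF assms(1)] by blast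
    then have "j \<noteq> 0" using j by (metis nth_Cons_0)
    moreover have "j \<le> 1"
    proof (rule ccontr)
      assume "\<not> j \<le> 1"
      then have "3 \<le> length (take (Suc j) ?xs)" using j by simp
      moreover have "is_path E (take (Suc j) ?xs)" by (rule is_path_take[OF assms(3)]) simp
      moreover have "last (take (Suc j) ?xs) = w"
        using j by (simp only: take_Suc_conv_app_nth last_snoc)
      ultimately show False
        using assms(2) \<open>{w, x} \<in> E\<close> unfolding has_cycle_def by fastforce
    qed
    ultimately show ?thesis using j by simp
  qed
  moreover have "p \<in> neighbours E x" using assms(3) by (simp add: mem_neighbours_iff)
  ultimately show ?thesis by blast
qed

lemma forest_has_leaf:
  assumes "finite V" "simple_graph V E" "\<not> has_cycle E" "E \<noteq> {}"
  obtains x y where "x \<in> V" "neighbours E x = {y}"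
proof -
  obtain e where "e \<in> E" using assms(4) by blast
  moreover obtain a b where "e = {a, b}" using simple_graph_edge_cases[OF assms(2) \<open>e \<in> E\<close>] .
  ultimately have ab: "{a, b} \<in> E" by simp
  define P where "P xs \<longleftrightarrow> is_path E xs \<and> set xs \<subseteq> V" for xs
  have "P [a, b]" using ab simple_graph_edgeD[OF assms(2) ab] by (simp add: P_def)
  moreover have "\<forall>xs. P xs \<longrightarrow> length xs < Suc (card V)"
  proof (intro allI impI)
    fix xs assume "P xs"
    then have "distinct xs" "set xs \<subseteq> V" by (simp_all add: P_def is_path_def)
    then have "length xs \<le> card V" using distinct_card card_mono[OF assms(1)] by metis
    then show "length xs < Suc (card V)" by simp
  qed
  ultimately obtain xs where "P xs" and longest: "\<And>ys. P ys \<Longrightarrow> length ys \<le> length xs"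
    using ex_has_greatest_nat[of P "[a, b]" length "Suc (card V)"] by blast
  have "2 \<le> length xs" using longest[OF \<open>P [a, b]\<close>] by simp
  then obtain x p rest where xs: "xs = x # p # rest"
    by (metis Suc_le_length_iff numeral_2_eq_2)
  have "neighbours E x = {p}"
    using \<open>P xs\<close> longest by (intro longest_path_starts_at_leaf[OF assms(2,3)]) (auto simp: P_def xs)
  moreover have "x \<in> V" using \<open>P xs\<close> by (simp add: P_def xs)
  ultimately show thesis using that by blast
qed

lemma simple_graph_remove_leaf:
  assumes "simple_graph V E" "neighbours E x = {y}"
  shows "simple_graph (V - {x}) (E - {{x, y}})"
  unfolding simple_graph_def
proof
  fix f assume f: "f \<in> E - {{x, y}}"
  have "x \<notin> f"
  proof
    assume "x \<in> f"
    then obtain w where "f = {x, w}" using f by (auto elim: simple_graph_edge_obtain[OF assms(1)])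
    then have "w = y" using assms(2) f by (auto simp: mem_neighbours_iff[symmetric])
    then show False using f \<open>f = {x, w}\<close> by simp
  qed
  then show "\<exists>p q. f = {p, q} \<and> p \<noteq> q \<and> p \<in> V - {x} \<and> q \<in> V - {x}"
    using assms(1) f unfolding simple_graph_def by blast
qed

lemma forest_card_edges_less:
  assumes "finite V" "V \<noteq> {}" "simple_graph V E" "\<not> has_cycle E"
  shows "card E < card V"
  using assms
proof (induction "card V" arbitrary: V E rule: less_induct)
  case less
  show ?case
  proof (cases "E = {}")
    case True
    then show ?thesis using less.prems by (simp add: card_gt_0_iff)
  next
    case False
    then obtain x y where x: "x \<in> V" "neighbours E x = {y}"
      using forest_has_leaf less.prems by metis
    then have xy: "{x, y} \<in> E" by (auto simp: mem_neighbours_iff)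
    define V' where "V' = V - {x}"
    define E' where "E' = E - {{x, y}}"
    have "simple_graph V' E'"
      unfolding V'_def E'_def using less.prems(3) x(2) by (rule simple_graph_remove_leaf)
    moreover have "\<not> has_cycle E'" using less.prems(4) has_cycle_mono by (auto simp: E'_def)
    moreover have "y \<in> V'" using simple_graph_edgeD[OF less.prems(3) xy] by (simp add: V'_def)
    moreover have "card V' < card V" unfolding V'_def using less.prems(1) x(1) by (rule card_Diff1_less)
    ultimately have "card E' < card V'"
      using less.hyps[of V' E'] less.prems(1) by (auto simp: V'_def)
    moreover have "finite E" using simple_graph_finite_edges less.prems(1,3) .
    ultimately show ?thesis
      using xy x(1) less.prems(1) by (simp add: E'_def V'_def card_Diff_singleton)
  qed
qed

lemma cycle_vertex_two_neighbours:
  assumes "is_path E xs" "3 \<le> length xs" "{last xs, hd xs} \<in> E" "i < length xs"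
  obtains p q where "p \<noteq> q" "p \<in> neighbours E (xs ! i)" "q \<in> neighbours E (xs ! i)" "p \<in> set xs" "q \<in> set xs"
proof -
  define L where "L = length xs"
  have edge: "{xs ! k, xs ! Suc k} \<in> E" if "Suc k < L" for k
    using assms(1) that unfolding is_path_def L_def by blast
  have "xs \<noteq> []" using assms(2) by auto
  then have closing: "{xs ! (L - 1), xs ! 0} \<in> E"
    using assms(3) by (simp add: L_def hd_conv_nth last_conv_nth)
  have neq: "xs ! j \<noteq> xs ! k" if "j < L" "k < L" "j \<noteq> k" for j k
    using assms(1) that by (simp add: is_path_def L_def nth_eq_iff_index_eq)
  have mem: "xs ! k \<in> set xs" if "k < L" for k
    using that by (simp add: L_def)
  have L3: "3 \<le> L" using assms(2) by (simp add: L_def)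
  consider "i = 0" | "i = L - 1" "0 < i" | "0 < i" "Suc i < L"
    using assms(4) L_def by linarith
  then show thesis
  proof cases
    case 1
    have "xs ! 1 \<noteq> xs ! (L - 1)" using neq L3 by simp
    moreover have "{xs ! i, xs ! 1} \<in> E" using edge[of 0] L3 1 by simp
    moreover have "{xs ! (L - 1), xs ! i} \<in> E" using closing 1 by simp
    ultimately show thesis
      using that mem[of 1] mem[of "L - 1"] L3 by (simp add: mem_neighbours_iff insert_commute)
  next
    case 2
    then have "Suc (i - 1) = i" "Suc (i - 1) < L" using L3 by auto
    then have "{xs ! (i - 1), xs ! i} \<in> E" using edge[of "i - 1"] by simp
    moreover have "xs ! (i - 1) \<noteq> xs ! 0" using neq L3 2 by simp
    moreover have "{xs ! i, xs ! 0} \<in> E" using closing 2 by simp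
    ultimately show thesis
      using that mem[of "i - 1"] mem[of 0] 2 L3 by (simp add: mem_neighbours_iff insert_commute)
  next
    case 3
    have "xs ! (i - 1) \<noteq> xs ! Suc i" using neq 3 by simp
    moreover have "{xs ! (i - 1), xs ! i} \<in> E" using edge[of "i - 1"] 3 by simp
    moreover have "{xs ! i, xs ! Suc i} \<in> E" using edge[of i] 3 by simp
    ultimately show thesis
      using that mem[of "i - 1"] mem[of "Suc i"] 3 by (simp add: mem_neighbours_iff insert_commute)
  qed
qed

section \<open>Edges dominating an acyclic graph\<close>

lemma acyclic_adjacent_neighbours_disjoint:
  assumes "simple_graph V E" "\<not> has_cycle E" "{x, z} \<in> E"
  shows "neighbours E x \<inter> neighbours E z = {}"
proof (rule ccontr)
  assume "neighbours E x \<inter> neighbours E z \<noteq> {}"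
  then obtain w where "{x, w} \<in> E" "{z, w} \<in> E" by (auto simp: mem_neighbours_iff)
  then have "has_cycle E"
    using assms(3) simple_graph_edgeD(1)[OF assms(1)]
    by (intro has_cycle_triangle[of x z E w]) (auto simp: insert_commute)
  with assms(2) show False by simp
qed

lemma dominating_edge_if_deg_sum_ge:
  assumes "finite V" "simple_graph V E" "\<not> has_cycle E" "{a, b} \<in> E"
    and "card V \<le> deg E a + deg E b"
  shows "neighbours E a \<union> neighbours E b = V"
proof (rule card_seteq)
  show "neighbours E a \<union> neighbours E b \<subseteq> V" using neighbours_subset[OF assms(2)] by blast
  have "finite (neighbours E a)" "finite (neighbours E b)"
    using neighbours_subset[OF assms(2)] assms(1) finite_subset by blast+
  then show "card V \<le> card (neighbours E a \<union> neighbours E b)"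
    using assms(5) acyclic_adjacent_neighbours_disjoint[OF assms(2-4)]
    by (simp add: card_Un_disjoint deg_eq_card_neighbours[OF assms(2)])
qed (rule assms(1))

lemma dominating_edge_outer_neighbours:
  assumes "simple_graph V E" "\<not> has_cycle E" "{x, z} \<in> E" "neighbours E x \<union> neighbours E z = V"
    and "v \<in> neighbours E x" "v \<noteq> z"
  shows "neighbours E v = {x}"
proof
  show "{x} \<subseteq> neighbours E v" using assms(5) mem_neighbours_sym by auto
  show "neighbours E v \<subseteq> {x}"
  proof
    fix y assume y: "y \<in> neighbours E v"
    have "{x, v} \<in> E" "{v, y} \<in> E" using assms(5) y by (simp_all add: mem_neighbours_iff)
    have "y \<notin> neighbours E x"
      using acyclic_adjacent_neighbours_disjoint[OF assms(1,2) \<open>{x, v} \<in> E\<close>] y by blast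
    then have "y \<in> neighbours E z" using y neighbours_subset[OF assms(1)] assms(4) by blast
    show "y \<in> {x}"
    proof (rule ccontr)
      assume "y \<notin> {x}"
      have "{y, z} \<in> E" using \<open>y \<in> neighbours E z\<close> by (simp add: mem_neighbours_iff insert_commute)
      then have "has_cycle E"
        using \<open>{x, v} \<in> E\<close> \<open>{v, y} \<in> E\<close> assms(3,6) \<open>y \<notin> {x}\<close> simple_graph_edgeD(1)[OF assms(1)]
        by (intro has_cycle_square[of v y E z x]) (auto simp: insert_commute)
      with assms(2) show False by simp
    qed
  qed
qed

lemma dominating_edge_max_degree_endpoint:
  assumes "finite V" "simple_graph V E" "\<not> has_cycle E" "{a, b} \<in> E"
    and "neighbours E a \<union> neighbours E b = V" "v \<in> V" "\<forall>x\<in>V. deg E x \<le> deg E v"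
  shows "v = a \<or> v = b"
proof -
  have False if "{x, z} \<in> E" "neighbours E x \<union> neighbours E z = V" "v \<in> neighbours E x" "v \<noteq> z" for x z
  proof -
    have "deg E v = 1"
      using dominating_edge_outer_neighbours[OF assms(2,3) that] deg_eq_card_neighbours[OF assms(2)] by simp
    have "{z, v} \<subseteq> neighbours E x" using that(1,3) by (simp add: mem_neighbours_iff)
    moreover have "finite (neighbours E x)" using neighbours_subset[OF assms(2)] assms(1) finite_subset by blast
    ultimately have "card {z, v} \<le> deg E x"
      using card_mono deg_eq_card_neighbours[OF assms(2)] by metis
    then have "2 \<le> deg E x" using that(4) by simp
    moreover have "deg E x \<le> deg E v"
      using assms(7) simple_graph_edgeD(2)[OF assms(2) that(1)] by blast
    ultimately show False using \<open>deg E v = 1\<close> by simp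
  qed
  moreover have "{b, a} \<in> E" "neighbours E b \<union> neighbours E a = V" using assms(4,5) by (auto simp: insert_commute)
  moreover have "v \<in> neighbours E a \<or> v \<in> neighbours E b" using assms(5,6) by blast
  ultimately show ?thesis using assms(4,5) by metis
qed

lemma graph_dist_le:
  assumes "is_path E xs" "hd xs = u" "last xs = v" "length xs = Suc k"
  shows "graph_dist E u v \<le> k"
  unfolding graph_dist_def by (rule Least_le) (use assms in blast)

lemma dominating_edge_graph_dist_le_2:
  assumes "simple_graph V E" "{x, z} \<in> E" "u \<in> neighbours E x \<union> neighbours E z"
  shows "graph_dist E u x \<le> 2"
proof -
  consider "u = x" | "{u, x} \<in> E" | "u \<noteq> x" "{u, z} \<in> E"
    using assms(3) by (auto simp: mem_neighbours_iff insert_commute)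
  then show ?thesis
  proof cases
    case 1
    then show ?thesis using graph_dist_le[of E "[x]" x x 0] by simp
  next
    case 2
    then have "u \<noteq> x" using simple_graph_edgeD(1)[OF assms(1)] by blast
    with 2 show ?thesis using graph_dist_le[of E "[u, x]" u x 1] by simp
  next
    case 3
    then have "u \<noteq> z" "z \<noteq> x" using simple_graph_edgeD(1)[OF assms(1)] assms(2) by blast+
    with 3 show ?thesis using assms(2) graph_dist_le[of E "[u, z, x]" u x 2] by (simp add: insert_commute)
  qed
qed

section \<open>Trees given by a parent map\<close>

definition parent_tree :: "(nat \<Rightarrow> nat) \<Rightarrow> nat \<Rightarrow> nat set set" where
  "parent_tree p n = (\<lambda>i. {p i, i}) ` {1..<n}"

lemma mem_neighbours_parent_tree_iff:
  "y \<in> neighbours (parent_tree p n) w \<longleftrightarrow> (w \<in> {1..<n} \<and> y = p w) \<or> (y \<in> {1..<n} \<and> w = p y)"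
  unfolding neighbours_def parent_tree_def by (auto simp: doubleton_eq_iff)

lemma parent_tree_simple_graph:
  assumes "\<And>i. i \<in> {1..<n} \<Longrightarrow> p i < i"
  shows "simple_graph {..<n} (parent_tree p n)"
  unfolding simple_graph_def parent_tree_def
proof
  fix e assume "e \<in> (\<lambda>i. {p i, i}) ` {1..<n}"
  then obtain i where "i \<in> {1..<n}" "e = {p i, i}" by blast
  then show "\<exists>u v. e = {u, v} \<and> u \<noteq> v \<and> u \<in> {..<n} \<and> v \<in> {..<n}"
    using assms[of i] by (intro exI[of _ "p i"] exI[of _ i]) auto
qed

lemma parent_tree_path_to_root:
  assumes "\<And>i. i \<in> {1..<n} \<Longrightarrow> p i < i" "w < n"
  shows "\<exists>xs. is_path (parent_tree p n) xs \<and> hd xs = w \<and> last xs = 0 \<and> set xs \<subseteq> {..w}"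
  using assms(2)
proof (induction w rule: less_induct)
  case (less w)
  show ?case
  proof (cases "w = 0")
    case True
    then show ?thesis by (intro exI[of _ "[0]"]) simp
  next
    case False
    then have "p w < w" using assms(1) less.prems by simp
    then obtain xs where xs: "is_path (parent_tree p n) xs" "hd xs = p w" "last xs = 0" "set xs \<subseteq> {..p w}"
      using less.IH less.prems by (meson order.strict_trans)
    then obtain ys where "xs = p w # ys" by (cases xs) (auto simp: is_path_def)
    moreover have "{w, p w} \<in> parent_tree p n"
      using False less.prems mem_neighbours_parent_tree_iff[of "p w" p n w] by (simp add: mem_neighbours_iff)
    ultimately show ?thesis using xs \<open>p w < w\<close> by (intro exI[of _ "w # xs"]) auto
  qed
qed

lemma parent_tree_acyclic:
  assumes "\<And>i. i \<in> {1..<n} \<Longrightarrow> p i < i"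
  shows "\<not> has_cycle (parent_tree p n)"
proof
  assume "has_cycle (parent_tree p n)"
  then obtain xs where cyc: "is_path (parent_tree p n) xs" "3 \<le> length xs"
    "{last xs, hd xs} \<in> parent_tree p n"
    unfolding has_cycle_def by blast
  \<comment> \<open>The largest vertex of the cycle has two smaller neighbours on it, but only its parent is smaller.\<close>
  define w where "w = Max (set xs)"
  have "w \<in> set xs" using cyc(2) unfolding w_def by (intro Max_in) auto
  then obtain i where "i < length xs" "xs ! i = w" by (auto simp: in_set_conv_nth)
  then obtain y z where "y \<noteq> z" "y \<in> neighbours (parent_tree p n) w" "z \<in> neighbours (parent_tree p n) w"
    "y \<in> set xs" "z \<in> set xs"
    using cycle_vertex_two_neighbours[OF cyc] by metis
  moreover have "v = p w" if "v \<in> neighbours (parent_tree p n) w" "v \<in> set xs" for v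
  proof -
    have "v \<le> w" using that(2) by (simp add: w_def)
    then show ?thesis using that(1) assms[of v] by (auto simp: mem_neighbours_parent_tree_iff)
  qed
  ultimately show False by metis
qed

lemma parent_tree_in_trees:
  assumes "\<And>i. i \<in> {1..<n} \<Longrightarrow> p i < i" "0 < n"
  shows "parent_tree p n \<in> trees n"
proof -
  have "graph_connected {..<n} (parent_tree p n)"
    using parent_tree_path_to_root[OF assms(1)] by (intro graph_connected_via_hub) blast
  then show ?thesis
    using assms parent_tree_simple_graph parent_tree_acyclic by (auto simp: trees_def is_tree_def)
qed

text \<open>Vertex 1 hangs from 0, so the centres 0 and 1 have degrees \<open>n div 2\<close> and \<open>n - n div 2\<close>.\<close>

definition double_star :: "nat \<Rightarrow> nat set set" where
  "double_star n = parent_tree (\<lambda>i. if i \<le> n div 2 then 0 else 1) n"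

lemma double_star_in_trees:
  assumes "0 < n"
  shows "double_star n \<in> trees n"
  unfolding double_star_def using assms by (intro parent_tree_in_trees) auto

lemma neighbours_double_star:
  assumes "2 \<le> n"
  shows "neighbours (double_star n) 0 = {1..n div 2}"
    and "neighbours (double_star n) 1 = insert 0 {n div 2<..<n}"
  using assms unfolding double_star_def set_eq_iff mem_neighbours_parent_tree_iff by auto

section \<open>The extremal bound\<close>

lemma two_mult_less_exp:
  fixes t :: real
  assumes "0 \<le> t"
  shows "2 * t < exp t"
proof (cases "t = 0")
  case False
  have "2 * t \<le> (1 + t / 2)\<^sup>2"
    using zero_le_power2[of "1 - t / 2"] by (simp add: power2_eq_square algebra_simps)
  also have "\<dots> < exp (t / 2) ^ 2"
    using exp_minus_greater[of "- (t / 2)"] False assms by (intro power_strict_mono) auto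
  also have "\<dots> = exp t" by (simp add: power2_eq_square exp_add[symmetric])
  finally show ?thesis .
qed simp

lemma eM2_le_if_deg_sum_le:
  assumes "simple_graph V E" "\<And>a b. {a, b} \<in> E \<Longrightarrow> deg E a + deg E b \<le> s"
  shows "eM2 E \<le> card E * exp (real s ^ 2 / 4)"
  unfolding eM2_def
proof (rule sum_bounded_above)
  fix e assume "e \<in> E"
  then obtain a b where e: "e = {a, b}" using simple_graph_edge_cases[OF assms(1)] by metis
  then have "a \<noteq> b" using simple_graph_edgeD(1)[OF assms(1)] \<open>e \<in> E\<close> by blast
  define x y where "x = real (deg E a)" and "y = real (deg E b)"
  have "x + y \<le> real s" using assms(2) \<open>e \<in> E\<close> e by (simp add: x_def y_def flip: of_nat_add)
  then have "(x + y)\<^sup>2 \<le> (real s)\<^sup>2" by (intro power_mono) (auto simp: x_def y_def)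
  moreover have "4 * (x * y) \<le> (x + y)\<^sup>2"
    using zero_le_power2[of "x - y"] by (simp add: power2_eq_square algebra_simps)
  ultimately have "x * y \<le> real s ^ 2 / 4" by simp
  then show "exp (real (\<Prod>v\<in>e. deg E v)) \<le> exp (real s ^ 2 / 4)"
    using \<open>a \<noteq> b\<close> by (simp add: e x_def y_def)
qed

lemma quarter_square_le_mult_halves: "((real n)\<^sup>2 - 1) / 4 \<le> real (n div 2 * (n - n div 2))"
proof (cases "even n")
  case True
  then obtain m where "n = 2 * m" by (auto elim!: evenE)
  then show ?thesis by (simp add: power2_eq_square)
next
  case False
  then obtain m where "n = 2 * m + 1" by (auto elim!: oddE)
  then show ?thesis by (simp add: power2_eq_square algebra_simps)
qed

lemma eM2_double_star_ge:
  assumes "2 \<le> n"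
  shows "exp (real (n div 2 * (n - n div 2))) \<le> eM2 (double_star n)"
proof -
  have sg: "simple_graph {..<n} (double_star n)"
    using double_star_in_trees assms by (simp add: trees_def is_tree_def)
  have "deg (double_star n) 0 = n div 2"
    unfolding deg_eq_card_neighbours[OF sg] neighbours_double_star(1)[OF assms] by simp
  moreover have "deg (double_star n) 1 = n - n div 2"
    unfolding deg_eq_card_neighbours[OF sg] neighbours_double_star(2)[OF assms] using assms by simp
  ultimately have prod: "(\<Prod>v\<in>{0, 1}. deg (double_star n) v) = n div 2 * (n - n div 2)" by simp
  have "{0, 1} \<in> double_star n"
    using neighbours_double_star(1)[OF assms] assms by (simp add: mem_neighbours_iff[symmetric])
  moreover have "finite (double_star n)" by (simp add: double_star_def parent_tree_def)
  ultimately have "exp (real (\<Prod>v\<in>{0, 1}. deg (double_star n) v)) \<le> eM2 (double_star n)"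
    unfolding eM2_def by (intro member_le_sum) simp_all
  then show ?thesis by (simp only: prod)
qed

lemma eM2_maximal_tree_has_heavy_edge:
  assumes "T \<in> trees n" "\<forall>T'' \<in> trees n. eM2 T'' \<le> eM2 T" "2 \<le> n"
  shows "\<exists>a b. {a, b} \<in> T \<and> n \<le> deg T a + deg T b"
proof (rule ccontr)
  assume "\<not> ?thesis"
  then have light: "\<And>a b. {a, b} \<in> T \<Longrightarrow> deg T a + deg T b \<le> n - 1" by fastforce
  have sg: "simple_graph {..<n} T" and acyclic: "\<not> has_cycle T"
    using assms(1) by (simp_all add: trees_def is_tree_def)
  have "{..<n} \<noteq> {}" using assms(3) by (simp add: lessThan_empty_iff)
  then have "card T < n" using forest_card_edges_less[OF _ _ sg acyclic] by simp
  define t where "t = (real n - 1) / 2"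
  have t: "real (n - 1) = 2 * t" "0 \<le> t" using assms(3) by (simp_all add: t_def of_nat_diff)
  have "eM2 T \<le> card T * exp (real (n - 1) ^ 2 / 4)"
    by (rule eM2_le_if_deg_sum_le[OF sg light])
  also have "\<dots> \<le> 2 * t * exp (t\<^sup>2)"
  proof -
    have "real (card T) \<le> 2 * t" using \<open>card T < n\<close> t(1) by linarith
    moreover have "real (n - 1) ^ 2 / 4 = t\<^sup>2" using t(1) by (simp add: power_mult_distrib)
    ultimately show ?thesis by (simp add: mult_right_mono)
  qed
  also have "\<dots> < exp t * exp (t\<^sup>2)" using two_mult_less_exp[OF t(2)] by simp
  also have "\<dots> = exp (t\<^sup>2 + t)" by (simp add: exp_add)
  also have "\<dots> \<le> exp (real (n div 2 * (n - n div 2)))"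
  proof -
    have "t\<^sup>2 + t = ((real n)\<^sup>2 - 1) / 4" by (simp add: t_def power2_eq_square field_simps)
    then show ?thesis using quarter_square_le_mult_halves[of n] by simp
  qed
  also have "\<dots> \<le> eM2 (double_star n)" using eM2_double_star_ge[OF assms(3)] .
  also have "\<dots> \<le> eM2 T" using assms(2,3) double_star_in_trees by simp
  finally show False by simp
qed

theorem lemma1:
  fixes n :: nat and T :: "nat set set" and u v :: nat
  assumes "T \<in> trees n"
    and "\<forall>T'' \<in> trees n. eM2 T'' \<le> eM2 T"
    and "u \<in> {..<n}" and "deg T u = 1"
    and "v \<in> {..<n}" and "deg T v = Max (deg T ` {..<n})"
  shows "graph_dist T u v \<le> 2"
proof -
  have sg: "simple_graph {..<n} T" and acyclic: "\<not> has_cycle T"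
    using assms(1) by (simp_all add: trees_def is_tree_def)
  \<comment> \<open>That \<open>u\<close> is pendant only matters for \<open>2 \<le> n\<close>: every vertex is within distance 2 of \<open>v\<close>.\<close>
  obtain w where "w \<in> neighbours T u"
    using assms(4) deg_eq_card_neighbours[OF sg] by (metis card.empty ex_in_conv zero_neq_one)
  then have "2 \<le> n" using simple_graph_edgeD[OF sg] by (fastforce simp: mem_neighbours_iff)
  then obtain a b where ab: "{a, b} \<in> T" "n \<le> deg T a + deg T b"
    using eM2_maximal_tree_has_heavy_edge assms(1,2) by blast
  then have cover: "neighbours T a \<union> neighbours T b = {..<n}"
    using dominating_edge_if_deg_sum_ge[OF _ sg acyclic] by simp
  have "\<forall>x\<in>{..<n}. deg T x \<le> deg T v" using assms(6) by simp
  then have "v = a \<or> v = b"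
    using dominating_edge_max_degree_endpoint[OF _ sg acyclic ab(1) cover assms(5)] by simp
  moreover have "{b, a} \<in> T" using ab(1) by (simp add: insert_commute)
  ultimately show ?thesis
    using dominating_edge_graph_dist_le_2[OF sg] ab(1) cover assms(3) by (metis Un_commute)
qed

end
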